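(* Consider Algorithm MWHVC (described in the context) run in the CONGEST model on a hypergraph $G=(V,E)$ of rank $f$ and maximum degree $\Delta\ge 3$ with nonnegative vertex weights $w$, with parameters $\varepsilon\in(0,1]$, $\beta=\varepsilon/(f+\varepsilon)$ and multiplier $\alpha=\log\Delta/\log\log\Delta$. Then the round complexity of the algorithm is $O\left(\frac{f^2}{\varepsilon}\cdot\frac{\log\Delta}{\log\log\Delta}\right)$.
   Context: Let $G=(V,E)$ be a hypergraph with $n=|V|$: each hyperedge is a nonempty subset of $V$ of size at most $f$ (rank $f$). Vertices have nonnegative weights $w(v)$; weights and degrees are assumed polynomial in $n$. For $v\in V$, $E(v)=\{e\in E: v\in e\}$; $\Delta=\max_v |E(v)|\ge 3$. A hyperedge $e$ is covered by $C\subseteq V$ if $e\cap C\neq\emptyset$. The computation is distributed in synchronous rounds (CONGEST: messages of $O(\log n)$ bits) on the bipartite network with node set $V\cup E$ and a link between $v$ and $e$ iff $v\in e$. Parameters: $\varepsilon\in(0,1]$, $\beta=\varepsilon/(f+\varepsilon)$, and a multiplier $\alpha>1$. Algorithm MWHVC: Initialize $C\gets\emptyset$ and $E'(v)\gets E(v)$ for every $v$. Iteration $0$: every hyperedge $e$ sets $\mathrm{deal}_0(e)=\beta\cdot\min_{v\in e} w(v)/|E(v)|$ and $\delta_0(e)=\mathrm{deal}_0(e)$. For $i=1,2,\dots$: (a) every vertex $v\notin C$ (not terminated) checks whether $\sum_{e\in E(v)}\delta_{i-1}(e)\ge(1-\beta)w(v)$; if so, $v$ joins $C$, tells every $e\in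 E'(v)$ that $e$ is covered, and terminates. (b) Every uncovered hyperedge that receives such a message becomes covered, informs all its vertices, and terminates. (c) Every vertex $v\notin C$ that is told $e$ is covered sets $E'(v)\gets E'(v)\setminus\{e\}$; if $E'(v)=\emptyset$, $v$ terminates without joining $C$. (d) Every vertex $v\notin C$ sends "raise" to all $e\in E'(v)$ if $\sum_{e\in E'(v)}\mathrm{deal}_{i-1}(e)\le(\beta/\alpha)w(v)$, and otherwise sends "stuck" to all $e\in E'(v)$. (e) Every uncovered hyperedge $e$ sets $\mathrm{deal}_i(e)=\mathrm{deal}_{i-1}(e)$ if it received some "stuck" message, and $\mathrm{deal}_i(e)=\alpha\cdot\mathrm{deal}_{i-1}(e)$ otherwise, and $\delta_i(e)=\delta_{i-1}(e)+\mathrm{deal}_i(e)$, sending the new deal to its vertices. A vertex terminates when it is in $C$ or all its hyperedges are covered; a hyperedge terminates when covered. *)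

theory Defs
  imports Complex_Main
begin

definition inc_edges :: "nat set set \<Rightarrow> nat \<Rightarrow> nat set set" where
  "inc_edges E v = {e \<in> E. v \<in> e}"

definition max_degree :: "nat set \<Rightarrow> nat set set \<Rightarrow> nat" where
  "max_degree V E = Max ((\<lambda>v. card (inc_edges E v)) ` V)"

text \<open>Global state after an iteration:
  (C, covered hyperedges, deal, delta). For a non-joined vertex v, the set
  E'(v) equals the set of incident hyperedges that are not yet covered.\<close>

type_synonym mwhvc_state =
  "nat set \<times> nat set set \<times> (nat set \<Rightarrow> real) \<times> (nat set \<Rightarrow> real)"

definition mwhvc_init ::
  "nat set set \<Rightarrow> (nat \<Rightarrow> real) \<Rightarrow> real \<Rightarrow> mwhvc_state" where
  "mwhvc_init E w \<beta> =
     (let d = (\<lambda>e. if e \<in> E then \<beta> * Min ((\<lambda>v. w v / real (card (inc_edges E v))) ` e) else 0)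
      in ({}, {}, d, d))"

text \<open>One iteration i \<ge> 1, steps (a)--(e).  A vertex is not terminated iff it is not in C
  and some incident hyperedge is uncovered.\<close>

definition mwhvc_step ::
  "nat set \<Rightarrow> nat set set \<Rightarrow> (nat \<Rightarrow> real) \<Rightarrow> real \<Rightarrow> real \<Rightarrow> mwhvc_state \<Rightarrow> mwhvc_state" where
  "mwhvc_step V E w \<beta> \<alpha> st =
     (case st of (C, Cov, deal, delta) \<Rightarrow>
       let J = {v \<in> V. v \<notin> C \<and> inc_edges E v - Cov \<noteq> {} \<and>
                        (\<Sum>e\<in>inc_edges E v. delta e) \<ge> (1 - \<beta>) * w v};
           C' = C \<union> J;
           Cov' = Cov \<union> {e \<in> E. e \<inter> J \<noteq> {}};
           stuck = (\<lambda>v. v \<notin> C' \<and> inc_edges E v - Cov' \<noteq> {} \<and>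
                        (\<Sum>e\<in>inc_edges E v - Cov'. deal e) > (\<beta> / \<alpha>) * w v);
           deal' = (\<lambda>e. if e \<in> E - Cov' then
                          (if (\<exists>v\<in>e. stuck v) then deal e else \<alpha> * deal e)
                        else deal e);
           delta' = (\<lambda>e. if e \<in> E - Cov' then delta e + deal' e else delta e)
       in (C', Cov', deal', delta'))"

definition mwhvc_state_at ::
  "nat set \<Rightarrow> nat set set \<Rightarrow> (nat \<Rightarrow> real) \<Rightarrow> real \<Rightarrow> real \<Rightarrow> nat \<Rightarrow> mwhvc_state" where
  "mwhvc_state_at V E w \<beta> \<alpha> i = (mwhvc_step V E w \<beta> \<alpha> ^^ i) (mwhvc_init E w \<beta>)"

text \<open>All nodes (vertices and hyperedges) have terminated after iteration i iff every
  hyperedge is covered.\<close>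

definition mwhvc_done_by ::
  "nat set \<Rightarrow> nat set set \<Rightarrow> (nat \<Rightarrow> real) \<Rightarrow> real \<Rightarrow> real \<Rightarrow> nat \<Rightarrow> bool" where
  "mwhvc_done_by V E w \<beta> \<alpha> i = (fst (snd (mwhvc_state_at V E w \<beta> \<alpha> i)) = E)"

end

theory Submission
  imports Defs "HOL-Analysis.Complex_Transcendental"
begin

text \<open>Fix an uncovered hyperedge \<open>e\<close> and consider the potential
  \<open>log\<^sub>\<alpha> deal\<^sub>i(e) + \<Sum>\<^sub>v\<^sub>\<in>\<^sub>e \<alpha> \<delta>\<^sub>i(v) / (\<beta> w(v))\<close>, where \<open>\<delta>\<^sub>i(v)\<close> is the sum of the
  \<open>\<delta>\<^sub>i\<close> of the hyperedges at \<open>v\<close>. In every iteration in which \<open>e\<close> stays uncovered the potential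
  grows by at least one: either \<open>e\<close> raises its deal by the factor \<open>\<alpha>\<close>, or some vertex of \<open>e\<close> is
  stuck, i.e. its uncovered hyperedges offer more than \<open>(\<beta>/\<alpha>) w(v)\<close>, all of which is added
  to \<open>\<delta>(v)\<close>. On the other hand a raise only happens when no vertex is stuck, so a deal never
  exceeds \<open>\<beta> w(u) \<le> \<Delta> deal\<^sub>0(e)\<close>; and a vertex of \<open>e\<close> that has not joined the cover has
  \<open>\<delta>(v) < (1 - \<beta>) w(v)\<close>. Hence \<open>e\<close> is covered after \<open>log\<^sub>\<alpha> \<Delta> + f \<alpha> (1 - \<beta>)/\<beta>\<close> iterations,
  which is \<open>O((f\<^sup>2/\<epsilon>) \<alpha>)\<close> for \<open>\<alpha> = log \<Delta> / log log \<Delta>\<close>.\<close>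

lemma finite_inc_edges: "finite E \<Longrightarrow> finite (inc_edges E v)"
  by (simp add: inc_edges_def)

lemma card_inc_edges_ge_1:
  assumes "finite E" "e \<in> E" "v \<in> e"
  shows "1 \<le> card (inc_edges E v)"
proof -
  have "e \<in> inc_edges E v" using assms by (simp add: inc_edges_def)
  then show ?thesis
    using finite_inc_edges[OF \<open>finite E\<close>] by (metis One_nat_def Suc_leI card_gt_0_iff empty_iff)
qed

lemma mwhvc_done_by_0_if_no_edges: "E = {} \<Longrightarrow> mwhvc_done_by V E w \<beta> \<alpha> 0"
  by (simp add: mwhvc_done_by_def mwhvc_state_at_def mwhvc_init_def Let_def)

locale mwhvc_run =
  fixes V :: "nat set" and E :: "nat set set" and w :: "nat \<Rightarrow> real" and \<beta> \<alpha> :: real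
  assumes finite_V: "finite V"
    and edges: "\<And>e. e \<in> E \<Longrightarrow> e \<noteq> {} \<and> e \<subseteq> V"
    and weight_nonneg: "\<And>v. v \<in> V \<Longrightarrow> 0 \<le> w v"
    and \<beta>_pos: "0 < \<beta>" and \<beta>_less_1: "\<beta> < 1"
    and \<alpha>_gt_1: "1 < \<alpha>"
begin

definition cover :: "nat \<Rightarrow> nat set" where
  "cover i = fst (mwhvc_state_at V E w \<beta> \<alpha> i)"

definition covered :: "nat \<Rightarrow> nat set set" where
  "covered i = fst (snd (mwhvc_state_at V E w \<beta> \<alpha> i))"

definition deal :: "nat \<Rightarrow> nat set \<Rightarrow> real" where
  "deal i = fst (snd (snd (mwhvc_state_at V E w \<beta> \<alpha> i)))"

definition delta :: "nat \<Rightarrow> nat set \<Rightarrow> real" where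
  "delta i = snd (snd (snd (mwhvc_state_at V E w \<beta> \<alpha> i)))"

text \<open>\<open>joining i\<close> and \<open>stuck i\<close> are the vertices that join \<open>C\<close> in step (a), resp. send
  "stuck" in step (d), of iteration \<open>i + 1\<close>.\<close>

definition joining :: "nat \<Rightarrow> nat set" where
  "joining i = {v \<in> V. v \<notin> cover i \<and> inc_edges E v - covered i \<noteq> {} \<and>
                       (1 - \<beta>) * w v \<le> (\<Sum>e\<in>inc_edges E v. delta i e)}"

definition stuck :: "nat \<Rightarrow> nat \<Rightarrow> bool" where
  "stuck i v \<longleftrightarrow> v \<notin> cover (Suc i) \<and> inc_edges E v - covered (Suc i) \<noteq> {} \<and>
                  (\<beta> / \<alpha>) * w v < (\<Sum>e\<in>inc_edges E v - covered (Suc i). deal i e)"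

definition load :: "nat \<Rightarrow> nat \<Rightarrow> real" where
  "load i v = (\<Sum>e\<in>inc_edges E v. delta i e)"

lemma state_at_eq: "mwhvc_state_at V E w \<beta> \<alpha> i = (cover i, covered i, deal i, delta i)"
  by (simp add: cover_def covered_def deal_def delta_def)

lemma state_at_Suc:
  "mwhvc_state_at V E w \<beta> \<alpha> (Suc i) = mwhvc_step V E w \<beta> \<alpha> (cover i, covered i, deal i, delta i)"
  by (simp add: mwhvc_state_at_def state_at_eq[symmetric])

lemma cover_Suc: "cover (Suc i) = cover i \<union> joining i"
  unfolding cover_def[of "Suc i"] state_at_Suc by (simp add: mwhvc_step_def Let_def joining_def)

lemma covered_Suc: "covered (Suc i) = covered i \<union> {e \<in> E. e \<inter> joining i \<noteq> {}}"
  unfolding covered_def[of "Suc i"] state_at_Suc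
  by (simp add: mwhvc_step_def Let_def joining_def)

lemma deal_Suc:
  "deal (Suc i) e =
     (if e \<in> E - covered (Suc i) \<and> \<not> (\<exists>v\<in>e. stuck i v) then \<alpha> * deal i e else deal i e)"
proof -
  have "deal (Suc i) e = (if e \<in> E - covered (Suc i)
      then (if \<exists>v\<in>e. stuck i v then deal i e else \<alpha> * deal i e) else deal i e)"
    unfolding deal_def[of "Suc i"] state_at_Suc stuck_def cover_Suc covered_Suc
    by (simp add: mwhvc_step_def Let_def joining_def)
  then show ?thesis by simp
qed

lemma delta_Suc:
  "delta (Suc i) e = (if e \<in> E - covered (Suc i) then delta i e + deal (Suc i) e else delta i e)"
  unfolding delta_def[of "Suc i"] deal_def[of "Suc i"] covered_def[of "Suc i"] state_at_Suc
  by (simp add: mwhvc_step_def Let_def)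

lemma cover_0: "cover 0 = {}"
  and covered_0: "covered 0 = {}"
  and deal_0: "deal 0 e =
    (if e \<in> E then \<beta> * Min ((\<lambda>v. w v / real (card (inc_edges E v))) ` e) else 0)"
  and delta_0: "delta 0 = deal 0"
  by (simp_all add: cover_def covered_def deal_def delta_def mwhvc_state_at_def
      mwhvc_init_def Let_def)

lemma finite_E: "finite E"
proof -
  have "E \<subseteq> Pow V" using edges by auto
  then show ?thesis using finite_V finite_subset by blast
qed

lemma finite_edge: "e \<in> E \<Longrightarrow> finite e"
  using edges finite_V finite_subset by blast

lemma covered_subset: "covered i \<subseteq> E"
  by (induction i) (auto simp: covered_0 covered_Suc)

lemma covered_Suc_mono: "covered i \<subseteq> covered (Suc i)"
  by (auto simp: covered_Suc)

lemma covered_if_meets_cover: "e \<in> E \<Longrightarrow> e \<inter> cover i \<noteq> {} \<Longrightarrow> e \<in> covered i"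
  by (induction i) (auto simp: cover_0 cover_Suc covered_Suc)

lemma deal_nonneg: "0 \<le> deal i e"
proof (induction i)
  case 0
  show ?case
  proof (cases "e \<in> E")
    case True
    have "finite e" "e \<noteq> {}" using True finite_edge edges by auto
    moreover have "\<forall>v\<in>e. 0 \<le> w v / real (card (inc_edges E v))"
      using True edges weight_nonneg by (intro ballI divide_nonneg_nonneg) auto
    ultimately show ?thesis using True \<beta>_pos by (simp add: deal_0)
  qed (simp add: deal_0)
next
  case (Suc i)
  then show ?case using \<alpha>_gt_1 by (simp add: deal_Suc)
qed

lemma deal_Suc_mono: "deal i e \<le> deal (Suc i) e"
  using deal_nonneg[of i e] \<alpha>_gt_1 mult_right_mono[of 1 \<alpha> "deal i e"] by (auto simp: deal_Suc)

lemma delta_nonneg: "0 \<le> delta i e"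
  by (induction i) (auto simp: delta_0 deal_nonneg delta_Suc intro: add_nonneg_nonneg)

lemma load_nonneg: "0 \<le> load i v"
  unfolding load_def by (intro sum_nonneg delta_nonneg)

lemma deal_0_le_weight:
  assumes "e \<in> E" "u \<in> e"
  shows "deal 0 e \<le> \<beta> * w u"
proof -
  have "Min ((\<lambda>v. w v / real (card (inc_edges E v))) ` e) \<le> w u / real (card (inc_edges E u))"
    using assms finite_edge by (intro Min_le) auto
  also have "\<dots> \<le> w u / 1"
    using card_inc_edges_ge_1[OF finite_E assms] weight_nonneg[of u] edges[OF assms(1)] assms(2)
    by (intro divide_left_mono) auto
  finally show ?thesis using assms \<beta>_pos by (simp add: deal_0)
qed

lemma deal_le_weight: "e \<in> E \<Longrightarrow> u \<in> e \<Longrightarrow> deal i e \<le> \<beta> * w u"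
proof (induction i)
  case 0
  then show ?case by (rule deal_0_le_weight)
next
  case (Suc i)
  show ?case
  proof (cases "e \<in> E - covered (Suc i) \<and> \<not> (\<exists>v\<in>e. stuck i v)")
    case True
    have "u \<notin> cover (Suc i)" using covered_if_meets_cover Suc.prems True by blast
    moreover have e_open: "e \<in> inc_edges E u - covered (Suc i)"
      using True Suc.prems by (simp add: inc_edges_def)
    ultimately have "(\<Sum>x\<in>inc_edges E u - covered (Suc i). deal i x) \<le> (\<beta> / \<alpha>) * w u"
      using True Suc.prems unfolding stuck_def by auto
    moreover have "deal i e \<le> (\<Sum>x\<in>inc_edges E u - covered (Suc i). deal i x)"
      using e_open finite_inc_edges[OF finite_E] deal_nonneg by (intro member_le_sum) auto
    ultimately have "\<alpha> * deal i e \<le> \<alpha> * ((\<beta> / \<alpha>) * w u)"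
      using \<alpha>_gt_1 by (intro mult_left_mono) auto
    then show ?thesis using True \<alpha>_gt_1 by (simp add: deal_Suc)
  next
    case False
    then show ?thesis using Suc by (auto simp: deal_Suc)
  qed
qed

lemma deal_pos:
  assumes e: "e \<in> E" and weights_pos: "\<And>v. v \<in> e \<Longrightarrow> 0 < w v"
  shows "0 < deal i e"
proof (induction i)
  case 0
  have "finite e" "e \<noteq> {}" using e finite_edge edges by auto
  moreover have "\<forall>v\<in>e. 0 < w v / real (card (inc_edges E v))"
    using weights_pos card_inc_edges_ge_1[OF finite_E e] by (auto intro!: divide_pos_pos simp: Suc_le_eq)
  ultimately show ?case using e \<beta>_pos by (simp add: deal_0)
next
  case (Suc i)
  then show ?case using deal_Suc_mono[of i e] by linarith
qed

lemma deal_le_degree_mult_deal_0: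
  assumes e: "e \<in> E" and degree: "\<And>u. u \<in> V \<Longrightarrow> real (card (inc_edges E u)) \<le> \<Delta>"
  shows "deal i e \<le> \<Delta> * deal 0 e"
proof -
  let ?r = "\<lambda>v. w v / real (card (inc_edges E v))"
  have "Min (?r ` e) \<in> ?r ` e"
    using e finite_edge edges by (intro Min_in) auto
  then obtain u where u: "u \<in> e" "Min (?r ` e) = ?r u" by auto
  have card_u: "1 \<le> real (card (inc_edges E u))"
    using card_inc_edges_ge_1[OF finite_E e u(1)] by simp
  have "deal i e \<le> \<beta> * w u" using deal_le_weight[OF e u(1)] .
  also have "\<dots> = real (card (inc_edges E u)) * deal 0 e"
    using e u card_u by (simp add: deal_0)
  also have "\<dots> \<le> \<Delta> * deal 0 e"
    using degree[of u] u(1) edges[OF e] deal_nonneg[of 0 e] by (intro mult_right_mono) auto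
  finally show ?thesis .
qed

lemma load_Suc:
  "load (Suc i) v = load i v + (\<Sum>e\<in>inc_edges E v - covered (Suc i). deal (Suc i) e)"
proof -
  have "load (Suc i) v =
      load i v + (\<Sum>e\<in>inc_edges E v. if e \<in> E - covered (Suc i) then deal (Suc i) e else 0)"
    unfolding load_def sum.distrib[symmetric] by (intro sum.cong) (auto simp: delta_Suc)
  also have "(\<Sum>e\<in>inc_edges E v. if e \<in> E - covered (Suc i) then deal (Suc i) e else 0) =
      (\<Sum>e\<in>inc_edges E v \<inter> (E - covered (Suc i)). deal (Suc i) e)"
    using finite_inc_edges[OF finite_E] by (simp add: sum.inter_restrict)
  also have "inc_edges E v \<inter> (E - covered (Suc i)) = inc_edges E v - covered (Suc i)"
    by (auto simp: inc_edges_def)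
  finally show ?thesis .
qed

lemma load_Suc_mono: "load i v \<le> load (Suc i) v"
  unfolding load_Suc by (simp add: sum_nonneg deal_nonneg)

lemma load_less_threshold:
  assumes e: "e \<in> E" and open_e: "e \<notin> covered (Suc i)" and v: "v \<in> e"
  shows "load i v < (1 - \<beta>) * w v"
proof (rule ccontr)
  assume "\<not> ?thesis"
  moreover have "v \<notin> cover i"
    using covered_if_meets_cover[OF e] covered_Suc_mono[of i] open_e v by auto
  moreover have "e \<in> inc_edges E v - covered i"
    using covered_Suc_mono[of i] open_e v e by (auto simp: inc_edges_def)
  ultimately have "v \<in> joining i"
    using v edges[OF e] unfolding joining_def load_def by auto
  then have "e \<in> covered (Suc i)" using e v by (auto simp: covered_Suc)
  with open_e show False by simp
qed

lemma weight_pos_if_uncovered: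
  assumes "e \<in> E" "e \<notin> covered (Suc i)" "v \<in> e"
  shows "0 < w v"
proof -
  have "0 < (1 - \<beta>) * w v" using load_less_threshold[OF assms] load_nonneg[of i v] by linarith
  then show ?thesis using \<beta>_less_1 by (simp add: zero_less_mult_iff)
qed

definition potential :: "nat \<Rightarrow> nat set \<Rightarrow> real" where
  "potential i e = ln (deal i e) / ln \<alpha> + (\<Sum>v\<in>e. \<alpha> * load i v / (\<beta> * w v))"

lemma load_term_Suc_mono:
  "0 < w v \<Longrightarrow> \<alpha> * load i v / (\<beta> * w v) \<le> \<alpha> * load (Suc i) v / (\<beta> * w v)"
  using load_Suc_mono[of i v] \<alpha>_gt_1 \<beta>_pos by (intro divide_right_mono mult_left_mono) auto

lemma potential_Suc_ge:
  assumes e: "e \<in> E" and weights_pos: "\<And>v. v \<in> e \<Longrightarrow> 0 < w v"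
    and open_e: "e \<notin> covered (Suc i)"
  shows "potential i e + 1 \<le> potential (Suc i) e"
proof (cases "\<exists>v\<in>e. stuck i v")
  case True
  then obtain v0 where v0: "v0 \<in> e" "stuck i v0" by auto
  have "(\<beta> / \<alpha>) * w v0 < (\<Sum>x\<in>inc_edges E v0 - covered (Suc i). deal i x)"
    using v0 unfolding stuck_def by auto
  also have "\<dots> \<le> (\<Sum>x\<in>inc_edges E v0 - covered (Suc i). deal (Suc i) x)"
    by (intro sum_mono deal_Suc_mono)
  finally have "load i v0 + (\<beta> / \<alpha>) * w v0 < load (Suc i) v0" by (simp add: load_Suc)
  then have "\<alpha> * (load i v0 + (\<beta> / \<alpha>) * w v0) / (\<beta> * w v0) < \<alpha> * load (Suc i) v0 / (\<beta> * w v0)"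
    using \<alpha>_gt_1 \<beta>_pos weights_pos[OF v0(1)]
    by (intro divide_strict_right_mono mult_strict_left_mono) auto
  moreover have "\<alpha> * (load i v0 + (\<beta> / \<alpha>) * w v0) / (\<beta> * w v0) = \<alpha> * load i v0 / (\<beta> * w v0) + 1"
    using \<alpha>_gt_1 \<beta>_pos weights_pos[OF v0(1)] by (simp add: field_simps)
  moreover have "(\<Sum>v\<in>e - {v0}. \<alpha> * load i v / (\<beta> * w v)) \<le>
      (\<Sum>v\<in>e - {v0}. \<alpha> * load (Suc i) v / (\<beta> * w v))"
    using weights_pos by (intro sum_mono load_term_Suc_mono) auto
  ultimately have "(\<Sum>v\<in>e. \<alpha> * load i v / (\<beta> * w v)) + 1 \<le> (\<Sum>v\<in>e. \<alpha> * load (Suc i) v / (\<beta> * w v))"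
    using finite_edge[OF e] v0(1) by (simp add: sum.remove)
  moreover have "deal (Suc i) e = deal i e" using True by (simp add: deal_Suc)
  ultimately show ?thesis unfolding potential_def by simp
next
  case False
  then have "deal (Suc i) e = \<alpha> * deal i e" using e open_e by (simp add: deal_Suc)
  then have "ln (deal (Suc i) e) / ln \<alpha> = 1 + ln (deal i e) / ln \<alpha>"
    using \<alpha>_gt_1 deal_pos[OF e weights_pos, of i] by (simp add: ln_mult field_simps)
  moreover have "(\<Sum>v\<in>e. \<alpha> * load i v / (\<beta> * w v)) \<le> (\<Sum>v\<in>e. \<alpha> * load (Suc i) v / (\<beta> * w v))"
    using weights_pos by (intro sum_mono load_term_Suc_mono) auto
  ultimately show ?thesis unfolding potential_def by linarith
qed

lemma potential_ge_iteration:
  assumes e: "e \<in> E" and weights_pos: "\<And>v. v \<in> e \<Longrightarrow> 0 < w v"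
  shows "e \<notin> covered i \<Longrightarrow> potential 0 e + real i \<le> potential i e"
proof (induction i)
  case (Suc i)
  then have "e \<notin> covered i" using covered_Suc_mono[of i] by auto
  then show ?case using Suc potential_Suc_ge[OF e weights_pos Suc.prems] by simp
qed simp

lemma log_deal_le_potential: "e \<in> E \<Longrightarrow> ln (deal i e) / ln \<alpha> \<le> potential i e"
  unfolding potential_def using \<alpha>_gt_1 \<beta>_pos weight_nonneg edges
  by (auto intro!: sum_nonneg divide_nonneg_nonneg mult_nonneg_nonneg load_nonneg)

lemma potential_less:
  assumes e: "e \<in> E" and open_e: "e \<notin> covered (Suc i)"
    and degree: "\<And>u. u \<in> V \<Longrightarrow> real (card (inc_edges E u)) \<le> \<Delta>"
  shows "potential i e < (ln \<Delta> + ln (deal 0 e)) / ln \<alpha> + real (card e) * (\<alpha> * (1 - \<beta>) / \<beta>)"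
proof -
  have weights_pos: "\<And>v. v \<in> e \<Longrightarrow> 0 < w v" using weight_pos_if_uncovered[OF e open_e] .
  have "(\<Sum>v\<in>e. \<alpha> * load i v / (\<beta> * w v)) < (\<Sum>v\<in>e. \<alpha> * (1 - \<beta>) / \<beta>)"
  proof (rule sum_strict_mono)
    fix v assume v: "v \<in> e"
    have "\<alpha> * load i v / (\<beta> * w v) < \<alpha> * ((1 - \<beta>) * w v) / (\<beta> * w v)"
      using load_less_threshold[OF e open_e v] \<alpha>_gt_1 \<beta>_pos weights_pos[OF v]
      by (intro divide_strict_right_mono mult_strict_left_mono) auto
    also have "\<dots> = \<alpha> * (1 - \<beta>) / \<beta>" using \<beta>_pos weights_pos[OF v] by simp
    finally show "\<alpha> * load i v / (\<beta> * w v) < \<alpha> * (1 - \<beta>) / \<beta>" .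
  qed (use e finite_edge edges in auto)
  moreover have "ln (deal i e) \<le> ln \<Delta> + ln (deal 0 e)"
  proof -
    have "0 < deal 0 e" "0 < deal i e" using deal_pos[OF e weights_pos] by auto
    moreover have "deal i e \<le> \<Delta> * deal 0 e" using deal_le_degree_mult_deal_0[OF e degree] .
    ultimately have "0 < \<Delta> * deal 0 e" "ln (deal i e) \<le> ln (\<Delta> * deal 0 e)" by auto
    then show ?thesis using \<open>0 < deal 0 e\<close> by (simp add: zero_less_mult_iff ln_mult)
  qed
  then have "ln (deal i e) / ln \<alpha> \<le> (ln \<Delta> + ln (deal 0 e)) / ln \<alpha>"
    using \<alpha>_gt_1 by (simp add: divide_right_mono)
  ultimately show ?thesis unfolding potential_def by simp
qed

lemma iterations_less_while_uncovered:
  assumes e: "e \<in> E" and open_e: "e \<notin> covered (Suc i)"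
    and degree: "\<And>u. u \<in> V \<Longrightarrow> real (card (inc_edges E u)) \<le> \<Delta>"
  shows "real i < ln \<Delta> / ln \<alpha> + real (card e) * (\<alpha> * (1 - \<beta>) / \<beta>)"
proof -
  have weights_pos: "\<And>v. v \<in> e \<Longrightarrow> 0 < w v" using weight_pos_if_uncovered[OF e open_e] .
  have "potential 0 e + real i \<le> potential i e"
    using potential_ge_iteration[OF e weights_pos] open_e covered_Suc_mono by blast
  then show ?thesis
    using log_deal_le_potential[OF e, of 0] potential_less[OF e open_e degree]
    unfolding add_divide_distrib by linarith
qed

lemma done_by_Suc:
  assumes degree: "\<And>u. u \<in> V \<Longrightarrow> real (card (inc_edges E u)) \<le> \<Delta>"
    and edge_size: "\<And>e. e \<in> E \<Longrightarrow> real (card e) \<le> F"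
    and enough: "ln \<Delta> / ln \<alpha> + F * (\<alpha> * (1 - \<beta>) / \<beta>) \<le> real i"
  shows "mwhvc_done_by V E w \<beta> \<alpha> (Suc i)"
proof -
  have "e \<in> covered (Suc i)" if e: "e \<in> E" for e
  proof (rule ccontr)
    assume "e \<notin> covered (Suc i)"
    then have "real i < ln \<Delta> / ln \<alpha> + real (card e) * (\<alpha> * (1 - \<beta>) / \<beta>)"
      using iterations_less_while_uncovered[OF e _ degree] by blast
    moreover have "real (card e) * (\<alpha> * (1 - \<beta>) / \<beta>) \<le> F * (\<alpha> * (1 - \<beta>) / \<beta>)"
      using edge_size[OF e] \<alpha>_gt_1 \<beta>_pos \<beta>_less_1 by (intro mult_right_mono) auto
    ultimately show False using enough by linarith
  qed
  then have "covered (Suc i) = E" using covered_subset by blast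
  then show ?thesis by (simp add: mwhvc_done_by_def covered_def)
qed

end

lemma rank_ge_1:
  assumes "finite V" "\<forall>e\<in>E. e \<noteq> {} \<and> e \<subseteq> V \<and> card e \<le> f" "E \<noteq> {}"
  shows "1 \<le> f"
proof -
  obtain e where e: "e \<in> E" using assms(3) by blast
  then have "finite e" using assms(1,2) finite_subset by blast
  then have "1 \<le> card e" using assms(2) e by (simp add: Suc_le_eq card_gt_0_iff)
  then show ?thesis using assms(2) e by (meson le_trans)
qed

lemma mwhvc_done_by_within:
  fixes f :: nat and \<epsilon> \<alpha> :: real
  assumes "finite V" and hyperedges: "\<forall>e\<in>E. e \<noteq> {} \<and> e \<subseteq> V \<and> card e \<le> f"
    and "\<forall>v\<in>V. 0 \<le> w v" and "E \<noteq> {}" and "0 < \<epsilon>" and "1 < \<alpha>"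
  shows "mwhvc_done_by V E w (\<epsilon> / (real f + \<epsilon>)) \<alpha>
           (Suc (nat \<lceil>ln (max_degree V E) / ln \<alpha> + real f ^ 2 / \<epsilon> * \<alpha>\<rceil>))"
proof -
  define \<beta> where "\<beta> = \<epsilon> / (real f + \<epsilon>)"
  have f: "1 \<le> real f" using rank_ge_1[OF assms(1,2,4)] by simp
  then have "0 < \<beta>" "\<beta> < 1" using \<open>0 < \<epsilon>\<close> by (auto simp: \<beta>_def field_simps)
  then interpret mwhvc_run V E w \<beta> \<alpha> using assms by unfold_locales auto
  have "1 - \<beta> = real f / (real f + \<epsilon>)"
    using f \<open>0 < \<epsilon>\<close> by (simp add: \<beta>_def field_simps)
  then have "(1 - \<beta>) / \<beta> = real f / \<epsilon>"
    using f \<open>0 < \<epsilon>\<close> by (simp add: \<beta>_def)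
  then have "real f * (\<alpha> * (1 - \<beta>) / \<beta>) = real f ^ 2 / \<epsilon> * \<alpha>"
    by (metis power2_eq_square times_divide_eq_left times_divide_eq_right mult.commute
        mult.left_commute)
  moreover have "real (card (inc_edges E u)) \<le> real (max_degree V E)" if "u \<in> V" for u
    using that \<open>finite V\<close> by (simp add: max_degree_def)
  ultimately show ?thesis unfolding \<beta>_def[symmetric] using hyperedges
    by (intro done_by_Suc[where F = "real f" and \<Delta> = "real (max_degree V E)"])
      (auto simp: real_nat_ceiling_ge)
qed

lemma ln_le_half_self:
  assumes "0 < (x::real)"
  shows "ln x \<le> x / 2"
proof -
  have "ln x = 2 * ln (sqrt x)" using assms by (simp add: ln_sqrt)
  also have "\<dots> \<le> 2 * (sqrt x - 1)" using ln_le_minus_one[of "sqrt x"] assms by simp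
  also have "\<dots> \<le> x / 2"
  proof -
    have "0 \<le> (sqrt x - 2) ^ 2" by simp
    also have "\<dots> = x - 4 * sqrt x + 4" using assms by (simp add: power2_eq_square algebra_simps)
    finally show ?thesis by simp
  qed
  finally show ?thesis .
qed

lemma ln_over_ln_ln_bounds:
  fixes \<Delta> :: real
  assumes "3 \<le> \<Delta>"
  defines "\<alpha> \<equiv> ln \<Delta> / ln (ln \<Delta>)"
  shows "2 \<le> \<alpha>" and "ln \<Delta> / ln \<alpha> \<le> 2 * \<alpha>"
proof -
  define x where "x = ln \<Delta>"
  have "ln 3 \<le> x" unfolding x_def using assms(1) by simp
  then have "1 < x" using ln3_gt_1 by linarith
  then have "0 < ln x" "ln x \<le> x / 2" using ln_le_half_self by auto
  then show "2 \<le> \<alpha>" by (simp add: \<alpha>_def x_def[symmetric] field_simps)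
  have "ln \<alpha> = ln x - ln (ln x)" using \<open>1 < x\<close> by (simp add: \<alpha>_def x_def ln_div)
  moreover have "ln (ln x) \<le> ln x / 2" using ln_le_half_self \<open>0 < ln x\<close> by simp
  ultimately have "ln x / 2 \<le> ln \<alpha>" by simp
  then have "x / ln \<alpha> \<le> x / (ln x / 2)"
    using \<open>1 < x\<close> \<open>0 < ln x\<close> \<open>2 \<le> \<alpha>\<close> by (intro divide_left_mono) (auto intro: mult_pos_pos)
  then show "ln \<Delta> / ln \<alpha> \<le> 2 * \<alpha>" by (simp add: \<alpha>_def x_def[symmetric] mult.commute)
qed

lemma ceiling_round_count_le:
  fixes L K \<alpha> :: real
  assumes "2 \<le> \<alpha>" "L \<le> 2 * \<alpha>" "1 \<le> K"
  shows "real (Suc (nat \<lceil>L + K * \<alpha>\<rceil>)) \<le> 4 * K * \<alpha>"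
proof -
  have "\<alpha> \<le> K * \<alpha>" using assms mult_right_mono[of 1 K \<alpha>] by simp
  moreover have "real (nat \<lceil>L + K * \<alpha>\<rceil>) \<le> max 0 (L + K * \<alpha>) + 1" by linarith
  moreover have "max 0 (L + K * \<alpha>) \<le> 2 * \<alpha> + K * \<alpha>" using assms calculation(1) by simp
  ultimately show ?thesis using assms(1) by (simp only: of_nat_Suc mult.assoc)
qed

theorem mainTheorem7:
  shows "\<exists>c::real. c > 0 \<and>
    (\<forall>(V::nat set) (E::nat set set) (w::nat \<Rightarrow> real) (f::nat) (\<epsilon>::real).
       finite V \<and> (\<forall>e\<in>E. e \<noteq> {} \<and> e \<subseteq> V \<and> card e \<le> f) \<and>
       max_degree V E \<ge> 3 \<and> (\<forall>v\<in>V. w v \<ge> 0) \<and> 0 < \<epsilon> \<and> \<epsilon> \<le> 1 \<longrightarrow>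
       (let \<Delta> = real (max_degree V E);
            \<beta> = \<epsilon> / (real f + \<epsilon>);
            \<alpha> = ln \<Delta> / ln (ln \<Delta>)
        in \<exists>T::nat. mwhvc_done_by V E w \<beta> \<alpha> T \<and>
                    real T \<le> c * (real f ^ 2 / \<epsilon>) * (ln \<Delta> / ln (ln \<Delta>))))"
proof (rule exI[of _ 4], intro conjI allI impI)
  fix V :: "nat set" and E :: "nat set set" and w :: "nat \<Rightarrow> real" and f :: nat and \<epsilon> :: real
  assume H: "finite V \<and> (\<forall>e\<in>E. e \<noteq> {} \<and> e \<subseteq> V \<and> card e \<le> f) \<and>
       max_degree V E \<ge> 3 \<and> (\<forall>v\<in>V. w v \<ge> 0) \<and> 0 < \<epsilon> \<and> \<epsilon> \<le> 1"
  define \<Delta> where "\<Delta> = real (max_degree V E)"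
  define \<alpha> where "\<alpha> = ln \<Delta> / ln (ln \<Delta>)"
  have "3 \<le> \<Delta>" using H by (simp add: \<Delta>_def)
  then have \<alpha>: "2 \<le> \<alpha>" "ln \<Delta> / ln \<alpha> \<le> 2 * \<alpha>"
    unfolding \<alpha>_def by (rule ln_over_ln_ln_bounds)+
  have "\<exists>T. mwhvc_done_by V E w (\<epsilon> / (real f + \<epsilon>)) \<alpha> T \<and> real T \<le> 4 * (real f ^ 2 / \<epsilon>) * \<alpha>"
  proof (cases "E = {}")
    case True
    then show ?thesis using mwhvc_done_by_0_if_no_edges \<alpha>(1) H by (intro exI[of _ 0]) auto
  next
    case False
    then have "1 \<le> real f" using H rank_ge_1 by auto
    then have "\<epsilon> \<le> real f ^ 2" using H one_le_power[of "real f" 2] by linarith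
    then have "1 \<le> real f ^ 2 / \<epsilon>" using H by simp
    then have "real (Suc (nat \<lceil>ln \<Delta> / ln \<alpha> + real f ^ 2 / \<epsilon> * \<alpha>\<rceil>)) \<le> 4 * (real f ^ 2 / \<epsilon>) * \<alpha>"
      by (rule ceiling_round_count_le[OF \<alpha>])
    moreover have "mwhvc_done_by V E w (\<epsilon> / (real f + \<epsilon>)) \<alpha>
        (Suc (nat \<lceil>ln \<Delta> / ln \<alpha> + real f ^ 2 / \<epsilon> * \<alpha>\<rceil>))"
      using mwhvc_done_by_within H False \<alpha>(1) unfolding \<Delta>_def by auto
    ultimately show ?thesis by blast
  qed
  then show "let \<Delta> = real (max_degree V E); \<beta> = \<epsilon> / (real f + \<epsilon>); \<alpha> = ln \<Delta> / ln (ln \<Delta>)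
    in \<exists>T. mwhvc_done_by V E w \<beta> \<alpha> T \<and> real T \<le> 4 * (real f ^ 2 / \<epsilon>) * (ln \<Delta> / ln (ln \<Delta>))"
    unfolding Let_def \<Delta>_def \<alpha>_def .
qed simp

end
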